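(* There exist a convex semialgebraic function $h:\mathbb{R}^2\to\mathbb{R}$ of class $C^1$ with $1$-Lipschitz gradient and a constant $\rho\in(0,1)$ such that $\|x-\nabla h(x)\|\le\rho\|x\|$ for all $x\in\mathbb{R}^2$, while $h$ is not strongly convex on any neighborhood of $0$ and the Clarke Jacobian $\mathrm{Jac}^c_{\nabla h}(0)$ contains a singular matrix.
   Context: Clarke Jacobian: for a locally Lipschitz $F:\mathbb{R}^N\to\mathbb{R}^m$, $\mathrm{Jac}^c_F(z)=\mathrm{conv}\{\lim_k \mathrm{Jac}_F(z_k): z_k\to z,\ F \text{ differentiable at } z_k\}$. A function is semialgebraic if its graph is a finite union of sets defined by finitely many polynomial equalities and inequalities. *)

theory Defs
  imports "HOL-Analysis.Analysis"
begin

definition poly_fun :: "('a::euclidean_space \<Rightarrow> real) \<Rightarrow> bool" where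
  "poly_fun p \<longleftrightarrow> (\<exists>(A :: ('a \<Rightarrow> nat) set) (c :: ('a \<Rightarrow> nat) \<Rightarrow> real).
      finite A \<and> p = (\<lambda>x. \<Sum>\<alpha>\<in>A. c \<alpha> * (\<Prod>b\<in>Basis. (x \<bullet> b) ^ \<alpha> b)))"

definition basic_semialgebraic :: "'a::euclidean_space set \<Rightarrow> bool" where
  "basic_semialgebraic S \<longleftrightarrow> (\<exists>P Q :: ('a \<Rightarrow> real) list.
      (\<forall>p\<in>set P. poly_fun p) \<and> (\<forall>q\<in>set Q. poly_fun q) \<and>
      S = {x. (\<forall>p\<in>set P. p x = 0) \<and> (\<forall>q\<in>set Q. q x > 0)})"

definition semialgebraic :: "'a::euclidean_space set \<Rightarrow> bool" where
  "semialgebraic S \<longleftrightarrow> (\<exists>F. finite F \<and> (\<forall>T\<in>F. basic_semialgebraic T) \<and> S = \<Union>F)"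

definition semialgebraic_fun :: "('a::euclidean_space \<Rightarrow> 'b::euclidean_space) \<Rightarrow> bool" where
  "semialgebraic_fun f \<longleftrightarrow> semialgebraic {(x, f x) | x. True}"

definition strongly_convex_on :: "'a::real_normed_vector set \<Rightarrow> ('a \<Rightarrow> real) \<Rightarrow> bool" where
  "strongly_convex_on S f \<longleftrightarrow> (\<exists>\<mu>>0. convex_on S (\<lambda>x. f x - \<mu> / 2 * (norm x)\<^sup>2))"

definition clarke_jacobian :: "(real^'n \<Rightarrow> real^'m) \<Rightarrow> real^'n \<Rightarrow> (real^'n^'m) set" where
  "clarke_jacobian F z = convex hull {M. \<exists>zs :: nat \<Rightarrow> real^'n.
      zs \<longlonglongrightarrow> z \<and> (\<forall>k. F differentiable (at (zs k))) \<and>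
      (\<lambda>k. matrix (frechet_derivative F (at (zs k)))) \<longlonglongrightarrow> M}"

end

theory Submission
  imports Defs
begin

text \<open>The example is \<open>h x = (x\<^sub>1\<^sup>4 + x\<^sub>1\<^sup>2 x\<^sub>2\<^sup>2 + x\<^sub>2\<^sup>4) / (4 |x|\<^sup>2)\<close>, extended by \<open>h 0 = 0\<close>.
  It is positively homogeneous of degree two, so \<open>\<nabla>h\<close> is homogeneous of degree one and smooth
  away from the origin, and the Hessian depends only on the direction of \<open>x\<close>. An explicit
  computation shows that the Hessian has its eigenvalues in \<open>[0, 1]\<close>; integrating along lines
  (lines through the origin are handled by homogeneity) this makes \<open>\<nabla>h\<close> monotone and
  1-Lipschitz, and monotonicity of the gradient gives convexity. On the axis \<open>x\<^sub>2 = 0\<close> the Hessian is \<open>diag (1/2, 0)\<close>, a singular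
  limit of Jacobians at points tending to \<open>0\<close>; and on vertical segments \<open>x\<^sub>1 = e\<close> the function
  grows only like \<open>t\<^sup>4 / e\<^sup>2\<close>, which rules out strong convexity near \<open>0\<close>.\<close>

section \<open>Polynomial functions and semialgebraic graphs\<close>

definition monomial_fun :: "('a::euclidean_space \<Rightarrow> nat) \<Rightarrow> 'a \<Rightarrow> real" where
  "monomial_fun \<alpha> x = (\<Prod>b\<in>Basis. (x \<bullet> b) ^ \<alpha> b)"

lemma poly_fun_iff_monomials:
  "poly_fun p \<longleftrightarrow> (\<exists>A c. finite A \<and> p = (\<lambda>x. \<Sum>\<alpha>\<in>A. c \<alpha> * monomial_fun \<alpha> x))"
  unfolding poly_fun_def monomial_fun_def by (rule refl)

lemma monomial_fun_add: "monomial_fun (\<lambda>b. \<alpha> b + \<beta> b) x = monomial_fun \<alpha> x * monomial_fun \<beta> x"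
  unfolding monomial_fun_def by (simp add: power_add prod.distrib)

lemma poly_fun_const: "poly_fun (\<lambda>x::'a::euclidean_space. c)"
  unfolding poly_fun_def by (intro exI[of _ "{\<lambda>_. 0}"] exI[of _ "\<lambda>_. c"]) simp

lemma poly_fun_inner_Basis:
  fixes b :: "'a::euclidean_space"
  assumes "b \<in> Basis"
  shows "poly_fun (\<lambda>x. x \<bullet> b)"
proof -
  have "(\<Prod>b'\<in>Basis. (x \<bullet> b') ^ (if b' = b then 1 else 0)) = x \<bullet> b" for x
    using assms by (simp add: if_distrib[of "\<lambda>n. _ ^ n"] prod.delta cong: if_cong)
  then show ?thesis unfolding poly_fun_def
    by (intro exI[of _ "{\<lambda>b'. if b' = b then 1 else 0}"] exI[of _ "\<lambda>_. 1"]) auto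
qed

lemma poly_fun_add:
  assumes "poly_fun p" "poly_fun q"
  shows "poly_fun (\<lambda>x. p x + q x)"
proof -
  obtain A c where A: "finite A" "p = (\<lambda>x. \<Sum>\<alpha>\<in>A. c \<alpha> * monomial_fun \<alpha> x)"
    using assms(1) unfolding poly_fun_iff_monomials by blast
  obtain B d where B: "finite B" "q = (\<lambda>x. \<Sum>\<alpha>\<in>B. d \<alpha> * monomial_fun \<alpha> x)"
    using assms(2) unfolding poly_fun_iff_monomials by blast
  define e where "e \<alpha> = (if \<alpha> \<in> A then c \<alpha> else 0) + (if \<alpha> \<in> B then d \<alpha> else 0)" for \<alpha>
  have "p x + q x = (\<Sum>\<alpha>\<in>A \<union> B. e \<alpha> * monomial_fun \<alpha> x)" for x
  proof -
    have "p x = (\<Sum>\<alpha>\<in>A \<union> B. (if \<alpha> \<in> A then c \<alpha> else 0) * monomial_fun \<alpha> x)"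
      unfolding A(2) using A(1) B(1) by (intro sum.mono_neutral_cong_left) auto
    moreover have "q x = (\<Sum>\<alpha>\<in>A \<union> B. (if \<alpha> \<in> B then d \<alpha> else 0) * monomial_fun \<alpha> x)"
      unfolding B(2) using A(1) B(1) by (intro sum.mono_neutral_cong_left) auto
    ultimately show ?thesis unfolding e_def by (simp only: distrib_right sum.distrib)
  qed
  then show ?thesis unfolding poly_fun_iff_monomials using A(1) B(1)
    by (intro exI[of _ "A \<union> B"] exI[of _ e]) auto
qed

lemma poly_fun_mult:
  assumes "poly_fun p" "poly_fun q"
  shows "poly_fun (\<lambda>x. p x * q x)"
proof -
  obtain A c where A: "finite A" "p = (\<lambda>x. \<Sum>\<alpha>\<in>A. c \<alpha> * monomial_fun \<alpha> x)"
    using assms(1) unfolding poly_fun_iff_monomials by blast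
  obtain B d where B: "finite B" "q = (\<lambda>x. \<Sum>\<alpha>\<in>B. d \<alpha> * monomial_fun \<alpha> x)"
    using assms(2) unfolding poly_fun_iff_monomials by blast
  define add where "add \<alpha>\<beta> = (\<lambda>b. fst \<alpha>\<beta> b + snd \<alpha>\<beta> b)" for \<alpha>\<beta> :: "('a \<Rightarrow> nat) \<times> ('a \<Rightarrow> nat)"
  define e where "e \<gamma> = (\<Sum>\<alpha>\<beta>\<in>{\<alpha>\<beta> \<in> A \<times> B. add \<alpha>\<beta> = \<gamma>}. c (fst \<alpha>\<beta>) * d (snd \<alpha>\<beta>))" for \<gamma>
  have fin: "finite (A \<times> B)" using A(1) B(1) by simp
  have "p x * q x = (\<Sum>\<gamma>\<in>add ` (A \<times> B). e \<gamma> * monomial_fun \<gamma> x)" for x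
  proof -
    have "p x * q x = (\<Sum>\<alpha>\<beta>\<in>A \<times> B. c (fst \<alpha>\<beta>) * d (snd \<alpha>\<beta>) * monomial_fun (add \<alpha>\<beta>) x)"
      unfolding A(2) B(2) sum_product sum.cartesian_product add_def monomial_fun_add
      by (simp add: split_def mult_ac)
    also have "\<dots> = (\<Sum>\<gamma>\<in>add ` (A \<times> B).
        \<Sum>\<alpha>\<beta>\<in>{\<alpha>\<beta> \<in> A \<times> B. add \<alpha>\<beta> = \<gamma>}. c (fst \<alpha>\<beta>) * d (snd \<alpha>\<beta>) * monomial_fun (add \<alpha>\<beta>) x)"
      by (rule sum.image_gen[OF fin])
    also have "\<dots> = (\<Sum>\<gamma>\<in>add ` (A \<times> B). e \<gamma> * monomial_fun \<gamma> x)"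
      unfolding e_def sum_distrib_right by (intro sum.cong refl) auto
    finally show ?thesis .
  qed
  then show ?thesis unfolding poly_fun_iff_monomials using fin
    by (intro exI[of _ "add ` (A \<times> B)"] exI[of _ e]) auto
qed

lemma poly_fun_power: "poly_fun p \<Longrightarrow> poly_fun (\<lambda>x. p x ^ n)"
  by (induction n) (simp_all add: poly_fun_const poly_fun_mult)

lemma poly_fun_diff:
  assumes "poly_fun p" "poly_fun q"
  shows "poly_fun (\<lambda>x. p x - q x)"
proof -
  have "poly_fun (\<lambda>x. p x + (-1) * q x)"
    by (intro poly_fun_add poly_fun_mult poly_fun_const assms)
  then show ?thesis by simp
qed

lemma poly_fun_sum:
  "finite I \<Longrightarrow> (\<And>i. i \<in> I \<Longrightarrow> poly_fun (p i)) \<Longrightarrow> poly_fun (\<lambda>x. \<Sum>i\<in>I. p i x)"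
  by (induction I rule: finite_induct) (simp_all add: poly_fun_const poly_fun_add)

lemma poly_fun_prod:
  "finite I \<Longrightarrow> (\<And>i. i \<in> I \<Longrightarrow> poly_fun (p i)) \<Longrightarrow> poly_fun (\<lambda>x. \<Prod>i\<in>I. p i x)"
  by (induction I rule: finite_induct) (simp_all add: poly_fun_const poly_fun_mult)

lemma poly_fun_compose_fst:
  fixes p :: "'a::euclidean_space \<Rightarrow> real"
  assumes "poly_fun p"
  shows "poly_fun (\<lambda>z::'a \<times> 'b::euclidean_space. p (fst z))"
proof -
  obtain A c where A: "finite A" "p = (\<lambda>x. \<Sum>\<alpha>\<in>A. c \<alpha> * (\<Prod>b\<in>Basis. (x \<bullet> b) ^ \<alpha> b))"
    using assms unfolding poly_fun_def by blast
  have "poly_fun (\<lambda>z::'a \<times> 'b. z \<bullet> (b, 0))" if "b \<in> Basis" for b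
    using that by (intro poly_fun_inner_Basis) (simp add: Basis_prod_def)
  then have "poly_fun (\<lambda>z::'a \<times> 'b. \<Sum>\<alpha>\<in>A. c \<alpha> * (\<Prod>b\<in>Basis. (z \<bullet> (b, 0)) ^ \<alpha> b))"
    by (intro poly_fun_sum poly_fun_mult poly_fun_prod poly_fun_power poly_fun_const A(1) finite_Basis)
  then show ?thesis unfolding A(2) by (simp add: inner_Pair_0)
qed

lemma poly_fun_snd: "poly_fun (\<lambda>z::'a::euclidean_space \<times> real. snd z)"
  using poly_fun_inner_Basis[of "(0, 1) :: 'a \<times> real"] by (simp add: Basis_prod_def inner_Pair_0)

lemma poly_fun_vec_nth: "poly_fun (\<lambda>x::real^'n. x $ i)"
  using poly_fun_inner_Basis[of "axis i 1 :: real^'n"] by (simp add: inner_axis)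

lemma basic_semialgebraicI:
  "\<forall>p\<in>set P. poly_fun p \<Longrightarrow> \<forall>q\<in>set Q. poly_fun q \<Longrightarrow>
   basic_semialgebraic {x. (\<forall>p\<in>set P. p x = 0) \<and> (\<forall>q\<in>set Q. q x > 0)}"
  unfolding basic_semialgebraic_def by blast

text \<open>Division by zero yields zero, so the graph of \<open>p / q\<close> splits along \<open>q = 0\<close>.\<close>
lemma semialgebraic_fun_divide:
  fixes p q :: "'a::euclidean_space \<Rightarrow> real"
  assumes "poly_fun p" "poly_fun q" "\<And>x. q x \<ge> 0"
  shows "semialgebraic_fun (\<lambda>x. p x / q x)"
proof -
  let ?pos = "{z::'a \<times> real. (\<forall>r\<in>set [\<lambda>z. snd z * q (fst z) - p (fst z)]. r z = 0) \<and>
                             (\<forall>r\<in>set [\<lambda>z. q (fst z)]. r z > 0)}"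
  let ?null = "{z::'a \<times> real. (\<forall>r\<in>set [\<lambda>z. q (fst z), snd]. r z = 0) \<and> (\<forall>r\<in>set ([] :: ('a \<times> real \<Rightarrow> real) list). r z > 0)}"
  have poly: "poly_fun (\<lambda>z::'a \<times> real. q (fst z))" "poly_fun (\<lambda>z::'a \<times> real. p (fst z))"
    using assms(1,2) by (simp_all add: poly_fun_compose_fst)
  have "basic_semialgebraic ?pos" "basic_semialgebraic ?null"
    by (rule basic_semialgebraicI; simp add: poly poly_fun_snd poly_fun_diff poly_fun_mult)+
  moreover have "{(x, p x / q x) | x. True} = ?pos \<union> ?null"
  proof -
    have "(x, y) \<in> ?pos \<union> ?null \<longleftrightarrow> y = p x / q x" for x y
      using assms(3)[of x] by (cases "q x = 0") (auto simp: field_simps)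
    then show ?thesis by fastforce
  qed
  ultimately show ?thesis
    unfolding semialgebraic_fun_def semialgebraic_def by (intro exI[of _ "{?pos, ?null}"]) auto
qed

section \<open>Derivatives, convexity and strong convexity\<close>

lemma has_derivative_vec_nth [derivative_intros]: "((\<lambda>x. x $ i) has_derivative (\<lambda>x. x $ i)) F"
  by (rule bounded_linear_imp_has_derivative[OF bounded_linear_vec_nth])

lemma vector_2_eq_axis: "vector [a, b] = a *\<^sub>R axis 1 1 + b *\<^sub>R (axis 2 1 :: real^2)"
  by (simp add: vec_eq_iff forall_2 axis_def)

lemma has_derivative_vector_2:
  assumes "(f has_derivative f') F" "(g has_derivative g') F"
  shows "((\<lambda>x. vector [f x, g x] :: real^2) has_derivative (\<lambda>v. vector [f' v, g' v])) F"
  unfolding vector_2_eq_axis by (intro has_derivative_add has_derivative_scaleR_left assms)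

lemma has_derivative_zero_if_quadratic_bound:
  fixes f :: "'a::real_normed_vector \<Rightarrow> 'b::real_normed_vector"
  assumes bound: "\<And>z. norm (f z) \<le> C * norm z ^ 2"
  shows "(f has_derivative (\<lambda>_. 0)) (at 0)"
proof -
  have f0: "f 0 = 0" using bound[of 0] by simp
  have "((\<lambda>z. norm (f z - f 0 - 0) / norm (z - 0)) \<longlongrightarrow> 0) (at 0)"
  proof (rule Lim_null_comparison)
    show "\<forall>\<^sub>F z in at 0. norm (norm (f z - f 0 - 0) / norm (z - 0)) \<le> C * norm z"
    proof (intro always_eventually allI)
      fix z :: 'a
      show "norm (norm (f z - f 0 - 0) / norm (z - 0)) \<le> C * norm z"
        using bound[of z] f0 by (cases "z = 0") (simp_all add: divide_le_eq power2_eq_square mult.assoc)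
    qed
    show "((\<lambda>z. C * norm z) \<longlongrightarrow> 0) (at (0::'a))"
      by (auto intro!: tendsto_eq_intros)
  qed
  then show ?thesis unfolding has_derivative_iff_norm by simp
qed

lemma convex_on_UNIV_if_monotone_gradient:
  fixes f :: "'a::real_inner \<Rightarrow> real"
  assumes deriv: "\<And>x. (f has_derivative (\<lambda>v. g x \<bullet> v)) (at x)"
    and mono: "\<And>x y. 0 \<le> (g y - g x) \<bullet> (y - x)"
  shows "convex_on UNIV f"
proof (rule convex_onI)
  fix u :: real and x y :: 'a
  define d where "d = y - x"
  define \<phi> where "\<phi> t = f (x + t *\<^sub>R d)" for t
  have "(\<phi> has_real_derivative g (x + t *\<^sub>R d) \<bullet> d) (at t)" for t
  proof -
    have "((\<lambda>t. x + t *\<^sub>R d) has_derivative (\<lambda>s. s *\<^sub>R d)) (at t)"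
      by (auto intro!: derivative_eq_intros)
    from has_derivative_compose[OF this deriv]
    have "(\<phi> has_derivative (\<lambda>s. g (x + t *\<^sub>R d) \<bullet> (s *\<^sub>R d))) (at t)"
      unfolding \<phi>_def .
    then show ?thesis by (rule has_derivative_imp_has_field_derivative) simp
  qed
  moreover have "g (x + s *\<^sub>R d) \<bullet> d \<le> g (x + t *\<^sub>R d) \<bullet> d" if "s \<le> t" for s t
  proof -
    have "0 \<le> (g (x + t *\<^sub>R d) - g (x + s *\<^sub>R d)) \<bullet> ((t - s) *\<^sub>R d)"
      using mono[of "x + s *\<^sub>R d" "x + t *\<^sub>R d"] by (simp add: algebra_simps)
    then show ?thesis using that by (cases "s = t") (auto simp: inner_diff_left zero_le_mult_iff)
  qed
  ultimately have "convex_on UNIV \<phi>"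
    by (intro convex_on_realI[where f' = "\<lambda>t. g (x + t *\<^sub>R d) \<bullet> d"]) auto
  moreover assume "0 < u" "u < 1"
  ultimately have "\<phi> ((1 - u) *\<^sub>R 0 + u *\<^sub>R 1) \<le> (1 - u) * \<phi> 0 + u * \<phi> 1"
    by (intro convex_onD) auto
  then show "f ((1 - u) *\<^sub>R x + u *\<^sub>R y) \<le> (1 - u) * f x + u * f y"
    by (simp add: \<phi>_def d_def algebra_simps)
qed simp

lemma strongly_convex_onE_midpoint:
  fixes f :: "'a::real_inner \<Rightarrow> real"
  assumes "strongly_convex_on U f"
  obtains \<mu> where "\<mu> > 0"
    "\<And>a b. a \<in> U \<Longrightarrow> b \<in> U \<Longrightarrow> f (midpoint a b) + \<mu> / 8 * (norm (a - b))\<^sup>2 \<le> (f a + f b) / 2"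
proof -
  obtain \<mu> where \<mu>: "\<mu> > 0" and cvx: "convex_on U (\<lambda>x. f x - \<mu> / 2 * (norm x)\<^sup>2)"
    using assms unfolding strongly_convex_on_def by blast
  have "f (midpoint a b) + \<mu> / 8 * (norm (a - b))\<^sup>2 \<le> (f a + f b) / 2" if "a \<in> U" "b \<in> U" for a b
  proof -
    have "f (midpoint a b) - \<mu> / 2 * (norm (midpoint a b))\<^sup>2 \<le>
        (1 - 1/2) * (f a - \<mu> / 2 * (norm a)\<^sup>2) + 1/2 * (f b - \<mu> / 2 * (norm b)\<^sup>2)"
      using convex_onD[OF cvx, of "1/2" a b] that by (simp add: midpoint_def scaleR_add_right)
    moreover have "(norm (midpoint a b))\<^sup>2 = ((norm a)\<^sup>2 + (norm b)\<^sup>2) / 2 - (norm (a - b))\<^sup>2 / 4"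
      by (simp add: midpoint_def power2_norm_eq_inner inner_add_left inner_add_right
          inner_diff_left inner_diff_right inner_commute field_simps)
    ultimately show ?thesis by (simp add: field_simps)
  qed
  with \<mu> that show ?thesis by blast
qed

section \<open>Symmetric \<open>2 \<times> 2\<close> matrices\<close>

lemma quadratic_form_2_nonneg:
  fixes p q t u w :: real
  assumes "0 \<le> p" "0 \<le> t" "q\<^sup>2 \<le> p * t"
  shows "0 \<le> p * u\<^sup>2 + 2 * q * u * w + t * w\<^sup>2"
proof (cases "p = 0")
  case True
  then show ?thesis using assms by simp
next
  case False
  have "p * (p * u\<^sup>2 + 2 * q * u * w + t * w\<^sup>2) = (p * u + q * w)\<^sup>2 + (p * t - q\<^sup>2) * w\<^sup>2"
    by (simp add: power2_eq_square algebra_simps)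
  also have "\<dots> \<ge> 0" using assms by simp
  finally show ?thesis using False assms(1) by (simp add: zero_le_mult_iff)
qed

text \<open>By Cayley--Hamilton \<open>M\<^sup>2 = (tr M) M - (det M) I\<close> for the symmetric matrix \<open>M\<close> with rows
  \<open>(p, q)\<close> and \<open>(q, t)\<close>; if \<open>0 \<le> M \<le> I\<close> then \<open>0 \<le> \<langle>Mv, v\<rangle> \<le> |v|\<^sup>2\<close> and \<open>tr M \<le> 1 + det M\<close>.\<close>
lemma symmetric_2_contraction:
  fixes p q t u w :: real
  assumes "0 \<le> p" "0 \<le> t" "q\<^sup>2 \<le> p * t" "p \<le> 1" "t \<le> 1" "q\<^sup>2 \<le> (1 - p) * (1 - t)"
  shows "(p * u + q * w)\<^sup>2 + (q * u + t * w)\<^sup>2 \<le> u\<^sup>2 + w\<^sup>2"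
proof -
  define form where "form = p * u\<^sup>2 + 2 * q * u * w + t * w\<^sup>2"
  define det where "det = p * t - q\<^sup>2"
  have cayley_hamilton: "(p * u + q * w)\<^sup>2 + (q * u + t * w)\<^sup>2 = (p + t) * form - det * (u\<^sup>2 + w\<^sup>2)"
    unfolding form_def det_def by (simp add: power2_eq_square algebra_simps)
  have "0 \<le> form" unfolding form_def using assms by (intro quadratic_form_2_nonneg) auto
  moreover have "0 \<le> (1 - p) * u\<^sup>2 + 2 * (- q) * u * w + (1 - t) * w\<^sup>2"
    using assms by (intro quadratic_form_2_nonneg) auto
  then have "form \<le> u\<^sup>2 + w\<^sup>2" unfolding form_def by (simp add: algebra_simps)
  moreover have "0 \<le> det" "p + t \<le> 1 + det"
    unfolding det_def using assms by (simp_all add: algebra_simps)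
  ultimately have "(p + t) * form \<le> (1 + det) * (u\<^sup>2 + w\<^sup>2)"
    by (meson mult_mono order.trans add_nonneg_nonneg zero_le_one)
  then show ?thesis unfolding cayley_hamilton by (simp add: algebra_simps)
qed

section \<open>The example\<close>

text \<open>\<open>p\<close>, \<open>t\<close> and \<open>q2\<close> are the Hessian entries \<open>h\<^sub>1\<^sub>1\<close>, \<open>h\<^sub>2\<^sub>2\<close> and \<open>h\<^sub>1\<^sub>2\<^sup>2\<close> of the example, written in
  \<open>a = x\<^sub>1\<^sup>2\<close> and \<open>b = x\<^sub>2\<^sup>2\<close>.\<close>
lemma hessian_bounds_in_squares:
  fixes a b :: real
  assumes a: "0 \<le> a" and b: "0 \<le> b" and ab: "0 < a + b"
  defines "p \<equiv> (a^3 + 3*a^2*b + 6*a*b^2) / (2*(a+b)^3)"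
    and "t \<equiv> (b^3 + 3*b^2*a + 6*b*a^2) / (2*(a+b)^3)"
    and "q2 \<equiv> 4*a^3*b^3 / (a+b)^6"
  shows "0 \<le> p" "0 \<le> t" "p \<le> 1" "t \<le> 1" "q2 \<le> p * t" "q2 \<le> (1 - p) * (1 - t)"
proof -
  have D: "0 < 2*(a+b)^3" using ab by simp
  have one_minus_p: "1 - p = (a^3 + 3*a^2*b + 2*b^3) / (2*(a+b)^3)"
    and one_minus_t: "1 - t = (b^3 + 3*b^2*a + 2*a^3) / (2*(a+b)^3)"
    unfolding p_def t_def using D by (simp_all add: field_simps power3_eq_cube power2_eq_square)
  show "0 \<le> p" "0 \<le> t" unfolding p_def t_def using a b D by simp_all
  have "0 \<le> 1 - p" "0 \<le> 1 - t" unfolding one_minus_p one_minus_t using a b D by simp_all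
  then show "p \<le> 1" "t \<le> 1" by simp_all
  have q2: "q2 = 16*a^3*b^3 / (2*(a+b)^3)^2"
    unfolding q2_def by (simp add: power_mult_distrib flip: power_mult)
  have "16*a^3*b^3 \<le> (a^3 + 3*a^2*b + 6*a*b^2) * (b^3 + 3*b^2*a + 6*b*a^2)"
  proof -
    have "(a^3 + 3*a^2*b + 6*a*b^2) * (b^3 + 3*b^2*a + 6*b*a^2) - 16*a^3*b^3
        = 6*a^5*b + 21*a^4*b^2 + 30*a^3*b^3 + 21*a^2*b^4 + 6*a*b^5"
      by (simp add: power2_eq_square power3_eq_cube algebra_simps numeral_eq_Suc)
    also have "\<dots> \<ge> 0" using a b by simp
    finally show ?thesis by simp
  qed
  moreover have "p * t = (a^3 + 3*a^2*b + 6*a*b^2) * (b^3 + 3*b^2*a + 6*b*a^2) / (2*(a+b)^3)^2"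
    unfolding p_def t_def by (simp add: power2_eq_square)
  ultimately show "q2 \<le> p * t" unfolding q2 by (metis divide_right_mono zero_le_power2)
  have "16*a^3*b^3 \<le> (a^3 + 3*a^2*b + 2*b^3) * (b^3 + 3*b^2*a + 2*a^3)"
  proof -
    have "(a^3 + 3*a^2*b + 2*b^3) * (b^3 + 3*b^2*a + 2*a^3) - 16*a^3*b^3
        = (a^3 - b^3)^2 + a^6 + b^6 + 6*a^5*b + 3*a^4*b^2 + 3*a^2*b^4 + 6*a*b^5"
      by (simp add: power2_eq_square power3_eq_cube algebra_simps numeral_eq_Suc)
    also have "\<dots> \<ge> 0" using a b by simp
    finally show ?thesis by simp
  qed
  moreover have "(1 - p) * (1 - t) =
      (a^3 + 3*a^2*b + 2*b^3) * (b^3 + 3*b^2*a + 2*a^3) / (2*(a+b)^3)^2"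
    unfolding one_minus_p one_minus_t by (simp add: power2_eq_square)
  ultimately show "q2 \<le> (1 - p) * (1 - t)" unfolding q2 by (metis divide_right_mono zero_le_power2)
qed

lemma inner_vec_2: "(x::real^2) \<bullet> y = x$1 * y$1 + x$2 * y$2"
  by (simp add: inner_vec_def sum_2)

lemma norm_vec_2_sq: "(norm (x::real^2))\<^sup>2 = (x$1)\<^sup>2 + (x$2)\<^sup>2"
  unfolding power2_norm_eq_inner inner_vec_2 by (simp add: power2_eq_square)

lemma vec_2_eq_iff: "(x::'a^2) = y \<longleftrightarrow> x$1 = y$1 \<and> x$2 = y$2"
  by (simp add: vec_eq_iff forall_2)

lemma sum_sq_vec_2_pos: "(x::real^2) \<noteq> 0 \<Longrightarrow> 0 < (x$1)\<^sup>2 + (x$2)\<^sup>2"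
  by (metis norm_vec_2_sq norm_eq_zero zero_less_power2)

lemma vector_2_mem_ball_0: "a\<^sup>2 + b\<^sup>2 < r\<^sup>2 \<Longrightarrow> 0 \<le> r \<Longrightarrow> (vector [a, b] :: real^2) \<in> ball 0 r"
  using power2_less_imp_less[of "norm (vector [a, b] :: real^2)" r] by (simp add: norm_vec_2_sq)

definition hfun :: "real^2 \<Rightarrow> real" where
  "hfun x = (x$1^4 + x$1^2 * x$2^2 + x$2^4) / (4 * (x$1^2 + x$2^2))"

definition dh1 :: "real^2 \<Rightarrow> real" where
  "dh1 x = (x$1^5 + 2 * x$1^3 * x$2^2) / (2 * (x$1^2 + x$2^2)^2)"

definition dh2 :: "real^2 \<Rightarrow> real" where
  "dh2 x = (x$2^5 + 2 * x$2^3 * x$1^2) / (2 * (x$1^2 + x$2^2)^2)"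

definition grad_h :: "real^2 \<Rightarrow> real^2" where
  "grad_h x = vector [dh1 x, dh2 x]"

definition hess11 :: "real^2 \<Rightarrow> real" where
  "hess11 x = (x$1^6 + 3 * x$1^4 * x$2^2 + 6 * x$1^2 * x$2^4) / (2 * (x$1^2 + x$2^2)^3)"

definition hess12 :: "real^2 \<Rightarrow> real" where
  "hess12 x = - 2 * x$1^3 * x$2^3 / (x$1^2 + x$2^2)^3"

definition hess22 :: "real^2 \<Rightarrow> real" where
  "hess22 x = (x$2^6 + 3 * x$2^4 * x$1^2 + 6 * x$2^2 * x$1^4) / (2 * (x$1^2 + x$2^2)^3)"

definition hess_h :: "real^2 \<Rightarrow> real^2 \<Rightarrow> real^2" where
  "hess_h x v = vector [hess11 x * v$1 + hess12 x * v$2, hess12 x * v$1 + hess22 x * v$2]"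

lemma grad_h_nth [simp]: "grad_h x $ 1 = dh1 x" "grad_h x $ 2 = dh2 x"
  by (simp_all add: grad_h_def)

lemma hess_h_nth [simp]:
  "hess_h x v $ 1 = hess11 x * v$1 + hess12 x * v$2"
  "hess_h x v $ 2 = hess12 x * v$1 + hess22 x * v$2"
  by (simp_all add: hess_h_def)

text \<open>In the derivative computations below the denominator is folded into \<open>S\<close> before
  clearing fractions; otherwise \<open>field_simps\<close> expands it and loses track of \<open>S \<noteq> 0\<close>.\<close>
lemma has_derivative_dh1:
  assumes "x \<noteq> 0"
  shows "(dh1 has_derivative (\<lambda>v. hess11 x * v$1 + hess12 x * v$2)) (at x)"
proof -
  define S where "S = x$1^2 + x$2^2"
  have S: "S \<noteq> 0" using sum_sq_vec_2_pos[OF assms] unfolding S_def by linarith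
  then have "2 * S^2 \<noteq> 0" by simp
  show ?thesis unfolding dh1_def hess11_def hess12_def
    apply (rule has_derivative_eq_rhs)
     apply (rule derivative_eq_intros refl \<open>2 * S^2 \<noteq> 0\<close>[unfolded S_def])+
    apply (rule ext)
    apply (simp only: S_def[symmetric])
    apply (simp add: S field_simps)
    apply (simp add: S_def power2_eq_square power3_eq_cube numeral_eq_Suc algebra_simps)
    done
qed

lemma has_derivative_dh2:
  assumes "x \<noteq> 0"
  shows "(dh2 has_derivative (\<lambda>v. hess12 x * v$1 + hess22 x * v$2)) (at x)"
proof -
  define S where "S = x$1^2 + x$2^2"
  have S: "S \<noteq> 0" using sum_sq_vec_2_pos[OF assms] unfolding S_def by linarith
  then have "2 * S^2 \<noteq> 0" by simp
  show ?thesis unfolding dh2_def hess12_def hess22_def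
    apply (rule has_derivative_eq_rhs)
     apply (rule derivative_eq_intros refl \<open>2 * S^2 \<noteq> 0\<close>[unfolded S_def])+
    apply (rule ext)
    apply (simp only: S_def[symmetric])
    apply (simp add: S field_simps)
    apply (simp add: S_def power2_eq_square power3_eq_cube numeral_eq_Suc algebra_simps)
    done
qed

lemma has_derivative_hfun_nonzero:
  assumes "x \<noteq> 0"
  shows "(hfun has_derivative (\<lambda>v. dh1 x * v$1 + dh2 x * v$2)) (at x)"
proof -
  define S where "S = x$1^2 + x$2^2"
  have S: "S \<noteq> 0" using sum_sq_vec_2_pos[OF assms] unfolding S_def by linarith
  then have "4 * S \<noteq> 0" by simp
  show ?thesis unfolding hfun_def dh1_def dh2_def
    apply (rule has_derivative_eq_rhs)
     apply (rule derivative_eq_intros refl \<open>4 * S \<noteq> 0\<close>[unfolded S_def])+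
    apply (rule ext)
    apply (simp only: S_def[symmetric])
    apply (simp add: S field_simps)
    apply (simp add: S_def power2_eq_square power3_eq_cube numeral_eq_Suc algebra_simps)
    done
qed

lemma hfun_quadratic_bound: "\<bar>hfun x\<bar> \<le> (norm x)\<^sup>2"
proof -
  define S where "S = (x$1)\<^sup>2 + (x$2)\<^sup>2"
  have "0 \<le> S" unfolding S_def by simp
  have "x$1^4 + x$1^2 * x$2^2 + x$2^4 = S\<^sup>2 - x$1^2 * x$2^2"
    unfolding S_def by (simp add: power2_eq_square numeral_eq_Suc algebra_simps)
  moreover have "0 \<le> x$1^2 * x$2^2" "0 \<le> x$1^4 + x$1^2 * x$2^2 + x$2^4"
    by (simp_all add: add_nonneg_nonneg)
  ultimately have num: "0 \<le> x$1^4 + x$1^2 * x$2^2 + x$2^4" "x$1^4 + x$1^2 * x$2^2 + x$2^4 \<le> S\<^sup>2"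
    by linarith+
  have "hfun x = (x$1^4 + x$1^2 * x$2^2 + x$2^4) / (4 * S)" by (simp add: hfun_def S_def)
  also have "\<bar>\<dots>\<bar> \<le> S\<^sup>2 / (4 * S)"
    using num \<open>0 \<le> S\<close> by (simp add: divide_right_mono)
  also have "\<dots> \<le> S" using \<open>0 \<le> S\<close> by (simp add: power2_eq_square)
  finally show ?thesis by (simp add: norm_vec_2_sq S_def)
qed

lemma grad_h_0 [simp]: "grad_h 0 = 0"
  by (simp add: vec_2_eq_iff dh1_def dh2_def)

lemma has_derivative_hfun: "(hfun has_derivative (\<lambda>v. grad_h x \<bullet> v)) (at x)"
proof (cases "x = 0")
  case True
  have "(hfun has_derivative (\<lambda>_. 0)) (at 0)"
    by (rule has_derivative_zero_if_quadratic_bound[of _ 1]) (simp add: hfun_quadratic_bound)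
  then show ?thesis using True by simp
next
  case False
  then show ?thesis using has_derivative_hfun_nonzero by (simp add: inner_vec_2 mult.commute)
qed

lemma has_derivative_grad_h: "x \<noteq> 0 \<Longrightarrow> (grad_h has_derivative hess_h x) (at x)"
  unfolding grad_h_def hess_h_def[abs_def]
  by (intro has_derivative_vector_2 has_derivative_dh1 has_derivative_dh2)

lemma hess_h_entry_bounds:
  assumes "x \<noteq> 0"
  shows "0 \<le> hess11 x" "0 \<le> hess22 x" "(hess12 x)\<^sup>2 \<le> hess11 x * hess22 x"
    "hess11 x \<le> 1" "hess22 x \<le> 1" "(hess12 x)\<^sup>2 \<le> (1 - hess11 x) * (1 - hess22 x)"
proof -
  have "hess11 x = ((x$1^2)^3 + 3*(x$1^2)^2*(x$2^2) + 6*(x$1^2)*(x$2^2)^2) / (2*(x$1^2 + x$2^2)^3)"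
    "hess22 x = ((x$2^2)^3 + 3*(x$2^2)^2*(x$1^2) + 6*(x$2^2)*(x$1^2)^2) / (2*(x$1^2 + x$2^2)^3)"
    "(hess12 x)\<^sup>2 = 4*(x$1^2)^3*(x$2^2)^3 / (x$1^2 + x$2^2)^6"
    by (simp_all add: hess11_def hess22_def hess12_def power_divide power_mult_distrib flip: power_mult)
  then show "0 \<le> hess11 x" "0 \<le> hess22 x" "(hess12 x)\<^sup>2 \<le> hess11 x * hess22 x"
    "hess11 x \<le> 1" "hess22 x \<le> 1" "(hess12 x)\<^sup>2 \<le> (1 - hess11 x) * (1 - hess22 x)"
    using hessian_bounds_in_squares[OF zero_le_power2 zero_le_power2 sum_sq_vec_2_pos[OF assms]]
    by simp_all
qed

lemma inner_hess_h_nonneg: "x \<noteq> 0 \<Longrightarrow> 0 \<le> hess_h x v \<bullet> v"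
  using quadratic_form_2_nonneg[of "hess11 x" "hess22 x" "hess12 x" "v$1" "v$2"] hess_h_entry_bounds[of x]
  by (simp add: inner_vec_2 power2_eq_square algebra_simps)

lemma norm_hess_h_le:
  assumes "x \<noteq> 0"
  shows "norm (hess_h x v) \<le> norm v"
proof -
  have "(norm (hess_h x v))\<^sup>2 \<le> (norm v)\<^sup>2"
    unfolding norm_vec_2_sq hess_h_nth using hess_h_entry_bounds[OF assms]
    by (intro symmetric_2_contraction) auto
  then show ?thesis by (rule power2_le_imp_le) simp
qed

lemma hess_h_scaleR: "hess_h x (c *\<^sub>R v) = c *\<^sub>R hess_h x v"
  by (simp add: vec_2_eq_iff algebra_simps)

lemma grad_h_scaleR: "grad_h (c *\<^sub>R x) = c *\<^sub>R grad_h x"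
proof -
  have hom: "((c*u)^5 + 2*(c*u)^3*(c*w)^2) / (2*((c*u)^2 + (c*w)^2)^2)
      = c * ((u^5 + 2*u^3*w^2) / (2*(u^2 + w^2)^2))" for u w :: real
  proof (cases "c = 0")
    case False
    have "(c*u)^5 + 2*(c*u)^3*(c*w)^2 = c * c^4 * (u^5 + 2*u^3*w^2)"
      "2*((c*u)^2 + (c*w)^2)^2 = c^4 * (2*(u^2 + w^2)^2)"
      by (simp_all add: power_mult_distrib algebra_simps numeral_eq_Suc)
    then show ?thesis using False by simp
  qed simp
  show ?thesis
    using hom[of "x$1" "x$2"] hom[of "x$2" "x$1"]
    by (simp add: vec_2_eq_iff dh1_def dh2_def add.commute)
qed

text \<open>Euler's identity for the degree-one homogeneous map \<open>\<nabla>h\<close>: differentiate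
  \<open>t \<mapsto> \<nabla>h (t x) = t \<nabla>h x\<close> at \<open>t = 1\<close>.\<close>
lemma grad_h_eq_hess_h:
  assumes "x \<noteq> 0"
  shows "grad_h x = hess_h x x"
proof -
  have "((\<lambda>t. t *\<^sub>R x) has_derivative (\<lambda>s. s *\<^sub>R x)) (at 1)"
    by (auto intro!: derivative_eq_intros)
  from has_derivative_compose[OF this has_derivative_grad_h]
  have "((\<lambda>t. grad_h (t *\<^sub>R x)) has_derivative (\<lambda>s. hess_h x (s *\<^sub>R x))) (at 1)"
    using assms by simp
  moreover have "((\<lambda>t. grad_h (t *\<^sub>R x)) has_derivative (\<lambda>s. s *\<^sub>R grad_h x)) (at 1)"
    unfolding grad_h_scaleR by (auto intro!: derivative_eq_intros)
  ultimately have "(\<lambda>s. hess_h x (s *\<^sub>R x)) = (\<lambda>s. s *\<^sub>R grad_h x)"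
    by (rule has_derivative_unique)
  then show ?thesis by (metis scaleR_one)
qed

lemma inner_grad_h_nonneg: "0 \<le> grad_h v \<bullet> v"
  using inner_hess_h_nonneg[of v v] by (cases "v = 0") (simp_all add: grad_h_eq_hess_h)

lemma norm_grad_h_le: "norm (grad_h v) \<le> norm v"
  using norm_hess_h_le[of v v] by (cases "v = 0") (simp_all add: grad_h_eq_hess_h)

text \<open>On a line through the origin \<open>\<nabla>h\<close> is affine by homogeneity, while on any other
  line the chain rule applies; in both cases the derivative has the bounds of \<open>\<nabla>\<^sup>2h\<close>.\<close>
lemma grad_h_along_line:
  "\<exists>D. (\<forall>t. ((\<lambda>t. grad_h (x + t *\<^sub>R d)) has_derivative (\<lambda>s. s *\<^sub>R D t)) (at t)) \<and>
       (\<forall>t. norm (D t) \<le> norm d) \<and> (\<forall>t. 0 \<le> D t \<bullet> d)"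
proof (cases "\<exists>t0. x + t0 *\<^sub>R d = 0")
  case True
  then obtain t0 where "x = - t0 *\<^sub>R d" by (metis add.commute eq_neg_iff_add_eq_0 scaleR_minus_left)
  then have "x + t *\<^sub>R d = (t - t0) *\<^sub>R d" for t by (simp add: algebra_simps)
  then have "grad_h (x + t *\<^sub>R d) = (t - t0) *\<^sub>R grad_h d" for t by (simp add: grad_h_scaleR)
  then have "((\<lambda>t. grad_h (x + t *\<^sub>R d)) has_derivative (\<lambda>s. s *\<^sub>R grad_h d)) (at t)" for t
    by (auto intro!: derivative_eq_intros)
  then show ?thesis using norm_grad_h_le inner_grad_h_nonneg by (intro exI[of _ "\<lambda>_. grad_h d"]) simp
next
  case False
  have "((\<lambda>t. grad_h (x + t *\<^sub>R d)) has_derivative (\<lambda>s. s *\<^sub>R hess_h (x + t *\<^sub>R d) d)) (at t)" for t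
  proof -
    have "((\<lambda>t. x + t *\<^sub>R d) has_derivative (\<lambda>s. s *\<^sub>R d)) (at t)"
      by (auto intro!: derivative_eq_intros)
    from has_derivative_compose[OF this has_derivative_grad_h] False
    show ?thesis by (simp add: hess_h_scaleR)
  qed
  moreover have "x + t *\<^sub>R d \<noteq> 0" for t using False by blast
  ultimately show ?thesis using norm_hess_h_le inner_hess_h_nonneg
    by (intro exI[of _ "\<lambda>t. hess_h (x + t *\<^sub>R d) d"]) simp
qed

lemma grad_h_lipschitz: "norm (grad_h y - grad_h x) \<le> norm (y - x)"
proof -
  obtain D where deriv: "\<And>t. ((\<lambda>t. grad_h (x + t *\<^sub>R (y - x))) has_derivative (\<lambda>s. s *\<^sub>R D t)) (at t)"
    and bound: "\<And>t. norm (D t) \<le> norm (y - x)"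
    using grad_h_along_line[of x "y - x"] by blast
  have "continuous_on {0..1} (\<lambda>t. grad_h (x + t *\<^sub>R (y - x)))"
    using has_derivative_continuous[OF deriv] by (intro continuous_at_imp_continuous_on) simp
  from mvt_general[OF zero_less_one this deriv]
  obtain t where "norm (grad_h (x + 1 *\<^sub>R (y - x)) - grad_h (x + 0 *\<^sub>R (y - x))) \<le> norm ((1 - 0) *\<^sub>R D t)"
    by blast
  then show ?thesis using bound[of t] by simp
qed

lemma grad_h_monotone: "0 \<le> (grad_h y - grad_h x) \<bullet> (y - x)"
proof -
  obtain D where deriv: "\<And>t. ((\<lambda>t. grad_h (x + t *\<^sub>R (y - x))) has_derivative (\<lambda>s. s *\<^sub>R D t)) (at t)"
    and nonneg: "\<And>t. 0 \<le> D t \<bullet> (y - x)"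
    using grad_h_along_line[of x "y - x"] by blast
  define \<phi> where "\<phi> t = grad_h (x + t *\<^sub>R (y - x)) \<bullet> (y - x)" for t
  have deriv_\<phi>: "(\<phi> has_real_derivative D t \<bullet> (y - x)) (at t)" for t
    unfolding \<phi>_def
    by (rule has_derivative_imp_has_field_derivative[OF has_derivative_inner_left[OF deriv]]) simp
  have "\<phi> 0 \<le> \<phi> 1"
  proof (rule DERIV_nonneg_imp_nondecreasing[of 0 1])
    show "\<exists>y. (\<phi> has_real_derivative y) (at t) \<and> 0 \<le> y" for t
      by (intro exI[of _ "D t \<bullet> (y - x)"] conjI deriv_\<phi> nonneg)
  qed simp
  then show ?thesis by (simp add: \<phi>_def inner_diff_left)
qed

lemma convex_hfun: "convex_on UNIV hfun"
  using has_derivative_hfun grad_h_monotone by (rule convex_on_UNIV_if_monotone_gradient)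

lemma semialgebraic_hfun: "semialgebraic_fun hfun"
  unfolding hfun_def[abs_def]
  by (intro semialgebraic_fun_divide poly_fun_add poly_fun_mult poly_fun_power poly_fun_const
      poly_fun_vec_nth) simp

lemma norm_sub_grad_h_le: "norm (x - grad_h x) \<le> 3/4 * norm x"
proof (cases "x = 0")
  case False
  define a b where "a = (x$1)\<^sup>2" and "b = (x$2)\<^sup>2"
  have a: "0 \<le> a" and b: "0 \<le> b" and ab: "0 < a + b"
    using sum_sq_vec_2_pos[OF False] unfolding a_def b_def by simp_all
  have "x$1^5 + 2 * x$1^3 * x$2^2 = x$1 * (a^2 + 2*a*b)"
    "x$2^5 + 2 * x$2^3 * x$1^2 = x$2 * (b^2 + 2*a*b)"
    unfolding a_def b_def by (simp_all add: power2_eq_square numeral_eq_Suc algebra_simps)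
  then have "dh1 x = x$1 * (a^2 + 2*a*b) / (2*(a+b)^2)" "dh2 x = x$2 * (b^2 + 2*a*b) / (2*(a+b)^2)"
    unfolding dh1_def dh2_def by (simp_all add: a_def b_def)
  then have "x$1 - dh1 x = x$1 * (a^2 + 2*a*b + 2*b^2) / (2*(a+b)^2)"
    "x$2 - dh2 x = x$2 * (2*a^2 + 2*a*b + b^2) / (2*(a+b)^2)"
    using ab by (simp_all add: field_simps) (simp_all add: power2_eq_square algebra_simps)
  then have "(norm (x - grad_h x))\<^sup>2 = (a*(a^2 + 2*a*b + 2*b^2)^2 + b*(2*a^2 + 2*a*b + b^2)^2) / (4*(a+b)^4)"
    by (simp add: norm_vec_2_sq power_divide power_mult_distrib a_def b_def add_divide_distrib
        flip: power_mult)
  also have "\<dots> \<le> 9/4 * (a+b)^5 / (4*(a+b)^4)"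
  proof (rule divide_right_mono)
    have "9 * (a+b)^5 - 4 * (a*(a^2 + 2*a*b + 2*b^2)^2 + b*(2*a^2 + 2*a*b + b^2)^2)
        = 5*a^5 + 13*a^4*b + 26*a^3*b^2 + 26*a^2*b^3 + 13*a*b^4 + 5*b^5"
      by (simp add: power2_eq_square power3_eq_cube algebra_simps numeral_eq_Suc)
    also have "\<dots> \<ge> 0" using a b by simp
    finally show "a*(a^2 + 2*a*b + 2*b^2)^2 + b*(2*a^2 + 2*a*b + b^2)^2 \<le> 9/4 * (a+b)^5" by simp
  qed simp
  also have "\<dots> = 9/16 * (a + b)"
  proof -
    have "9/4 * s^5 / (4 * s^4) = 9/16 * s" if "0 < s" for s :: real
      using that by (simp add: eval_nat_numeral)
    then show ?thesis using ab .
  qed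
  also have "\<dots> = (3/4 * norm x)\<^sup>2"
    unfolding power_mult_distrib norm_vec_2_sq a_def b_def by (simp add: power2_eq_square algebra_simps)
  finally show ?thesis by (rule power2_le_imp_le) simp
qed simp

lemma hfun_vertical_midpoint_gap:
  assumes "e \<noteq> 0"
  shows "(hfun (vector [e, t]) + hfun (vector [e, - t])) / 2 \<le> hfun (vector [e, 0]) + t^4 / (4 * e\<^sup>2)"
proof -
  have "hfun (vector [e, s]) = e\<^sup>2 / 4 + s^4 / (4 * (e\<^sup>2 + s\<^sup>2))" for s
  proof -
    define K where "K = e\<^sup>2 + s\<^sup>2"
    have "K \<noteq> 0" using assms unfolding K_def by (simp add: add_nonneg_eq_0_iff)
    have "e^4 + e^2 * s^2 + s^4 = e\<^sup>2 * K + s^4"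
      unfolding K_def by (simp add: power2_eq_square numeral_eq_Suc algebra_simps)
    then show ?thesis using \<open>K \<noteq> 0\<close>
      by (simp add: hfun_def K_def[symmetric] add_divide_distrib)
  qed
  moreover have "t^4 / (4 * (e\<^sup>2 + t\<^sup>2)) \<le> t^4 / (4 * e\<^sup>2)"
    using assms by (intro divide_left_mono) (simp_all add: zero_less_mult_iff add_pos_nonneg)
  ultimately show ?thesis by simp
qed

text \<open>Along a vertical segment \<open>x\<^sub>1 = e\<close> the function \<open>h\<close> grows only like \<open>t\<^sup>4 / e\<^sup>2\<close>,
  too slowly for a quadratic lower bound once \<open>t\<^sup>2 < 2 \<mu> e\<^sup>2\<close>.\<close>
lemma not_strongly_convex_hfun: "\<not> (\<exists>U. open U \<and> 0 \<in> U \<and> strongly_convex_on U hfun)"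
proof
  assume "\<exists>U. open U \<and> 0 \<in> U \<and> strongly_convex_on U hfun"
  then obtain U where "open U" "0 \<in> U" and strongly_convex: "strongly_convex_on U hfun" by blast
  obtain \<mu> where \<mu>: "\<mu> > 0" and mid:
    "\<And>a b. a \<in> U \<Longrightarrow> b \<in> U \<Longrightarrow> hfun (midpoint a b) + \<mu> / 8 * (norm (a - b))\<^sup>2 \<le> (hfun a + hfun b) / 2"
    using strongly_convex_onE_midpoint[OF strongly_convex] by blast
  obtain \<delta> where \<delta>: "\<delta> > 0" "ball 0 \<delta> \<subseteq> U" using \<open>open U\<close> \<open>0 \<in> U\<close> open_contains_ball by blast
  define e where "e = \<delta> / 2"
  define m where "m = min (1/2) \<mu>"
  define t where "t = e * m"
  have m: "0 < m" "m \<le> 1/2" "m \<le> \<mu>" using \<mu> by (simp_all add: m_def)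
  have e: "e > 0" and t: "t > 0" using \<delta> m by (simp_all add: e_def t_def)
  have "m * m \<le> (1/2) * (1/2)" "m * m \<le> (1/2) * \<mu>"
    using m by (intro mult_mono; simp)+
  then have t_small: "t\<^sup>2 \<le> e\<^sup>2 / 4" "t\<^sup>2 \<le> e\<^sup>2 * \<mu> / 2"
    unfolding t_def power_mult_distrib power2_eq_square[of m] using e by (simp_all add: mult_left_mono)
  have "e\<^sup>2 = \<delta>\<^sup>2 / 4" "0 < \<delta>\<^sup>2" using \<delta>(1) by (simp_all add: e_def power_divide)
  then have "e\<^sup>2 + t\<^sup>2 < \<delta>\<^sup>2" using t_small(1) by linarith
  then have vertical_in_U: "vector [e, s] \<in> U" if "s\<^sup>2 = t\<^sup>2" for s
    using \<delta> that by (intro subsetD[OF \<delta>(2)] vector_2_mem_ball_0) simp_all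
  define p q where "p = (vector [e, t] :: real^2)" and "q = (vector [e, - t] :: real^2)"
  have "midpoint p q = vector [e, 0]"
    by (simp add: p_def q_def vec_2_eq_iff midpoint_def)
  moreover have "(norm (p - q))\<^sup>2 = 4 * t\<^sup>2"
    unfolding norm_vec_2_sq by (simp add: p_def q_def power2_eq_square)
  moreover have "p \<in> U" "q \<in> U" using vertical_in_U by (simp_all add: p_def q_def)
  ultimately have "hfun (vector [e, 0]) + \<mu> / 8 * (4 * t\<^sup>2) \<le> (hfun p + hfun q) / 2"
    using mid by metis
  also have "\<dots> \<le> hfun (vector [e, 0]) + t^4 / (4 * e\<^sup>2)"
    unfolding p_def q_def using e by (intro hfun_vertical_midpoint_gap) simp
  finally have "2 * (e\<^sup>2 * \<mu>) * t\<^sup>2 \<le> t\<^sup>2 * t\<^sup>2"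
    using e by (simp add: pos_le_divide_eq power2_eq_square numeral_eq_Suc algebra_simps)
  then have "2 * (e\<^sup>2 * \<mu>) \<le> t\<^sup>2" by (rule mult_right_le_imp_le) (use t in simp)
  moreover have "0 < e\<^sup>2 * \<mu>" using e \<mu> by simp
  ultimately show False using t_small(2) by linarith
qed

lemma hess_h_axis_1: "c \<noteq> 0 \<Longrightarrow> hess_h (c *\<^sub>R axis 1 1) = (\<lambda>v. vector [v$1 / 2, 0])"
  by (simp add: fun_eq_iff vec_2_eq_iff hess11_def hess12_def hess22_def axis_def)

lemma not_invertible_matrix_projection:
  "\<not> invertible (matrix (\<lambda>v::real^2. vector [v$1 / 2, 0] :: real^2))"
proof
  let ?P = "\<lambda>v::real^2. vector [v$1 / 2, 0] :: real^2"
  assume "invertible (matrix ?P)"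
  then have "inj ((*v) (matrix ?P))"
    unfolding invertible_def by (metis matrix_left_invertible_injective)
  moreover have "linear ?P" by (intro linearI) (simp_all add: vec_2_eq_iff add_divide_distrib)
  then have "(*v) (matrix ?P) = ?P" by (simp add: fun_eq_iff matrix_works)
  ultimately have "inj ?P" by simp
  moreover have "?P (axis 2 1) = ?P 0" by (simp add: vec_2_eq_iff axis_def)
  ultimately have "axis 2 1 = (0 :: real^2)" by (rule injD)
  then show False by (simp add: vec_2_eq_iff axis_def)
qed

text \<open>The limit is taken along the first axis, where \<open>\<nabla>\<^sup>2h\<close> is constant and degenerate.\<close>
lemma clarke_jacobian_grad_h_0: "\<exists>M\<in>clarke_jacobian grad_h 0. \<not> invertible M"
proof
  define zs where "zs k = inverse (real (Suc k)) *\<^sub>R (axis 1 1 :: real^2)" for k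
  have zs_nonzero: "zs k \<noteq> 0" for k by (simp add: zs_def axis_def vec_eq_iff)
  have "zs \<longlonglongrightarrow> 0"
    unfolding zs_def using tendsto_scaleR[OF LIMSEQ_inverse_real_of_nat tendsto_const] by simp
  moreover have "grad_h differentiable (at (zs k))" for k
    using has_derivative_grad_h[OF zs_nonzero] by (rule differentiableI)
  moreover have "frechet_derivative grad_h (at (zs k)) = (\<lambda>v. vector [v$1 / 2, 0])" for k
    using frechet_derivative_at[OF has_derivative_grad_h[OF zs_nonzero[of k]]]
    by (simp add: zs_def hess_h_axis_1)
  ultimately show "matrix (\<lambda>v. vector [v$1 / 2, 0]) \<in> clarke_jacobian grad_h 0"
    unfolding clarke_jacobian_def by (intro hull_inc CollectI exI[of _ zs]) simp
qed (rule not_invertible_matrix_projection)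

theorem proposition4:
  shows "\<exists>(h :: real^2 \<Rightarrow> real) (g :: real^2 \<Rightarrow> real^2) (\<rho>::real).
     convex_on UNIV h \<and> semialgebraic_fun h \<and>
     (\<forall>x. (h has_derivative (\<lambda>v. g x \<bullet> v)) (at x)) \<and>
     continuous_on UNIV g \<and>
     (\<forall>x y. norm (g x - g y) \<le> norm (x - y)) \<and>
     0 < \<rho> \<and> \<rho> < 1 \<and>
     (\<forall>x. norm (x - g x) \<le> \<rho> * norm x) \<and>
     \<not> (\<exists>U. open U \<and> 0 \<in> U \<and> strongly_convex_on U h) \<and>
     (\<exists>M\<in>clarke_jacobian g 0. \<not> invertible M)"
proof (intro exI conjI allI)
  show "convex_on UNIV hfun" by (rule convex_hfun)
  show "semialgebraic_fun hfun" by (rule semialgebraic_hfun)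
  show "(hfun has_derivative (\<lambda>v. grad_h x \<bullet> v)) (at x)" for x by (rule has_derivative_hfun)
  show "norm (grad_h x - grad_h y) \<le> norm (x - y)" for x y by (rule grad_h_lipschitz)
  show "continuous_on UNIV grad_h"
    by (rule lipschitz_on_continuous_on[where L = 1], rule lipschitz_onI)
      (simp_all add: dist_norm grad_h_lipschitz)
  show "norm (x - grad_h x) \<le> 3/4 * norm x" for x by (rule norm_sub_grad_h_le)
  show "\<not> (\<exists>U. open U \<and> 0 \<in> U \<and> strongly_convex_on U hfun)" by (rule not_strongly_convex_hfun)
  show "\<exists>M\<in>clarke_jacobian grad_h 0. \<not> invertible M" by (rule clarke_jacobian_grad_h_0)
qed simp_all

end
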